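(* Let $(X,\ast,u,d)$ be a finite GL-rack, let $\Delta=\alpha_1\cdots\alpha_n$ be the disjoint cycle decomposition of its diagonal map (fixed points counted as $1$-cycles), $A_i=\operatorname{supp}(\alpha_i)$, and let $B_1,\dots,B_m$ be the sets obtained by taking, for each cycle length $\ell$ occurring, the union of all $A_i$ with $|A_i|=\ell$. Then for each $1\le j\le m$, $B_j\ast X:=\{b\ast x: b\in B_j, x\in X\}=B_j$.
   Context: A rack is a set $X$ with a binary operation $\ast$ such that for every $y\in X$ the map $x\mapsto x\ast y$ is a bijection of $X$ and $(x\ast y)\ast z=(x\ast z)\ast(y\ast z)$ for all $x,y,z$. A GL-rack is a quadruple $(X,\ast,u,d)$ where $(X,\ast)$ is a rack and $u,d\colon X\to X$ are maps such that for all $x,y\in X$: $u(d(x\ast x))=d(u(x\ast x))=x$; $u(x\ast y)=u(x)\ast y$ and $d(x\ast y)=d(x)\ast y$; $x\ast u(y)=x\ast d(y)=x\ast y$. The diagonal map is $\Delta(x)=x\ast x$; for a finite GL-rack it is a bijection (rack automorphism) and $\Delta=(u\circ d)^{-1}$. *)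

theory Defs
  imports Main "HOL-Combinatorics.Orbits"
begin

definition is_rack :: "'a set \<Rightarrow> ('a \<Rightarrow> 'a \<Rightarrow> 'a) \<Rightarrow> bool" where
  "is_rack X op \<longleftrightarrow>
     (\<forall>x\<in>X. \<forall>y\<in>X. op x y \<in> X) \<and>
     (\<forall>y\<in>X. bij_betw (\<lambda>x. op x y) X X) \<and>
     (\<forall>x\<in>X. \<forall>y\<in>X. \<forall>z\<in>X. op (op x y) z = op (op x z) (op y z))"

definition is_GL_rack :: "'a set \<Rightarrow> ('a \<Rightarrow> 'a \<Rightarrow> 'a) \<Rightarrow> ('a \<Rightarrow> 'a) \<Rightarrow> ('a \<Rightarrow> 'a) \<Rightarrow> bool" where
  "is_GL_rack X op u d \<longleftrightarrow>
     is_rack X op \<and>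
     (\<forall>x\<in>X. u x \<in> X) \<and> (\<forall>x\<in>X. d x \<in> X) \<and>
     (\<forall>x\<in>X. u (d (op x x)) = x \<and> d (u (op x x)) = x) \<and>
     (\<forall>x\<in>X. \<forall>y\<in>X. u (op x y) = op (u x) y \<and> d (op x y) = op (d x) y) \<and>
     (\<forall>x\<in>X. \<forall>y\<in>X. op x (u y) = op x y \<and> op x (d y) = op x y)"

definition diag :: "('a \<Rightarrow> 'a \<Rightarrow> 'a) \<Rightarrow> 'a \<Rightarrow> 'a" where
  "diag op x = op x x"

definition cycle_length :: "('a \<Rightarrow> 'a \<Rightarrow> 'a) \<Rightarrow> 'a \<Rightarrow> nat" where
  "cycle_length op x = card (orbit (diag op) x)"

end

theory Submission
  imports Defs
begin

text \<open>Self-distributivity says exactly that every right translation \<open>z \<mapsto> z \<ast> x\<close>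
  commutes with the diagonal map \<open>\<Delta>\<close>. Being injective, a right translation therefore maps
  each \<open>\<Delta>\<close>-cycle bijectively onto a \<open>\<Delta>\<close>-cycle of the same length, so it permutes every
  union \<open>B\<^sub>j\<close> of cycles of a fixed length; as \<open>X\<close> is nonempty, \<open>B\<^sub>j \<ast> X = B\<^sub>j\<close>.\<close>

lemma rack_closed:
  assumes "is_rack X op" "x \<in> X" "y \<in> X"
  shows "op x y \<in> X"
  using assms unfolding is_rack_def by blast

lemma rack_right_translation_bij:
  assumes "is_rack X op" "x \<in> X"
  shows "bij_betw (\<lambda>z. op z x) X X"
  using assms unfolding is_rack_def by blast

lemma funpow_diag_closed:
  assumes "is_rack X op" "y \<in> X"
  shows "(diag op ^^ n) y \<in> X"
  by (induction n) (simp_all add: assms diag_def rack_closed[OF assms(1)])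

lemma orbit_diag_subset:
  assumes "is_rack X op" "y \<in> X"
  shows "orbit (diag op) y \<subseteq> X"
  unfolding orbit_altdef using funpow_diag_closed[OF assms] by blast

lemma diag_right_translation:
  assumes "is_rack X op" "y \<in> X" "x \<in> X"
  shows "diag op (op y x) = op (diag op y) x"
proof -
  have "op (op y y) x = op (op y x) (op y x)"
    using assms unfolding is_rack_def by blast
  then show ?thesis
    unfolding diag_def by simp
qed

lemma funpow_diag_right_translation:
  assumes "is_rack X op" "y \<in> X" "x \<in> X"
  shows "(diag op ^^ n) (op y x) = op ((diag op ^^ n) y) x"
proof (induction n)
  case (Suc n)
  then show ?case
    using diag_right_translation[OF assms(1) funpow_diag_closed[OF assms(1,2)] assms(3)] by simp
qed simp

lemma orbit_diag_right_translation:
  assumes "is_rack X op" "y \<in> X" "x \<in> X"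
  shows "orbit (diag op) (op y x) = (\<lambda>z. op z x) ` orbit (diag op) y"
proof -
  have "orbit (diag op) (op y x) = {op ((diag op ^^ n) y) x |n. 0 < n}"
    unfolding orbit_altdef by (simp add: funpow_diag_right_translation[OF assms])
  then show ?thesis
    unfolding orbit_altdef by blast
qed

lemma cycle_length_right_translation:
  assumes "is_rack X op" "y \<in> X" "x \<in> X"
  shows "cycle_length op (op y x) = cycle_length op y"
proof -
  have "inj_on (\<lambda>z. op z x) (orbit (diag op) y)"
    using bij_betw_imp_inj_on[OF rack_right_translation_bij[OF assms(1,3)]]
      orbit_diag_subset[OF assms(1,2)] inj_on_subset by blast
  then show ?thesis
    unfolding cycle_length_def orbit_diag_right_translation[OF assms] by (simp add: card_image)
qed

lemma right_translation_image_cycle_length_class: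
  assumes "is_rack X op" "x \<in> X"
  shows "(\<lambda>z. op z x) ` {y \<in> X. cycle_length op y = l} = {y \<in> X. cycle_length op y = l}"
    (is "?f ` ?B = ?B")
proof
  show "?f ` ?B \<subseteq> ?B"
    using cycle_length_right_translation[OF assms(1) _ assms(2)] rack_closed[OF assms(1) _ assms(2)]
    by auto
  show "?B \<subseteq> ?f ` ?B"
  proof
    fix z
    assume z: "z \<in> ?B"
    have "?f ` X = X"
      using bij_betw_imp_surj_on[OF rack_right_translation_bij[OF assms]] .
    with z obtain y where y: "y \<in> X" "z = op y x"
      by blast
    then have "y \<in> ?B"
      using z cycle_length_right_translation[OF assms(1) y(1) assms(2)] by simp
    with y(2) show "z \<in> ?f ` ?B"
      by blast
  qed
qed

theorem proposition3p7:
  fixes X :: "'a set" and op :: "'a \<Rightarrow> 'a \<Rightarrow> 'a" and u d :: "'a \<Rightarrow> 'a" and l :: nat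
  assumes "finite X"
    and "is_GL_rack X op u d"
    and "\<exists>x\<in>X. cycle_length op x = l"
  shows "{op b x | b x. b \<in> {y \<in> X. cycle_length op y = l} \<and> x \<in> X}
           = {y \<in> X. cycle_length op y = l}"
proof -
  let ?B = "{y \<in> X. cycle_length op y = l}"
  have rack: "is_rack X op"
    using assms(2) by (simp add: is_GL_rack_def)
  have "{op b x | b x. b \<in> ?B \<and> x \<in> X} = (\<Union>x\<in>X. (\<lambda>z. op z x) ` ?B)"
    by blast
  also have "\<dots> = (\<Union>x\<in>X. ?B)"
    using right_translation_image_cycle_length_class[OF rack] by simp
  also have "\<dots> = ?B"
    using assms(3) by blast
  finally show ?thesis .
qed

end
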